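(* Let $N\ge1$, $V=\{1,\dots,N\}$, $A$ an $N\times N$ row-stochastic matrix, and $\sigma_1,\sigma_2,\dots$ random variables with values in $2^V$. Consider $x(k+1)=A_{\sigma_k}x(k)$, $k\ge1$, with deterministic $x(1)\in\mathbb R^N$. Then the iteration reaches consensus almost surely if and only if $\lim_{k\to\infty}\mathbb P\big(\lambda(A_{\sigma_k}A_{\sigma_{k-1}}\cdots A_{\sigma_1})\ge\varepsilon\big)=0$ for every $\varepsilon>0$.
   Context: For $\sigma\subseteq V$, $A_\sigma$ is the matrix whose $j$-th row equals the $j$-th row of $A$ if $j\in\sigma$ and equals $e_j^T$ otherwise. For a row-stochastic matrix $B=(b_{ij})$, the ergodic coefficient is $\lambda(B)=1-\min_{i\neq j}\sum_{k=1}^N\min(b_{ik},b_{jk})$. The iteration reaches consensus almost surely if for every $\varepsilon>0$ and every $x(1)\in\mathbb R^N$, $\lim_{k\to\infty}\mathbb P\big(\sum_{j=1}^N (x_j(k)-\frac1N\sum_{i=1}^N x_i(k))^2\ge\varepsilon\big)=0$. *)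

theory Defs
  imports "HOL-Probability.Probability"
begin

text \<open>Row-stochastic matrix (index set V modelled by the finite type 'n, N = CARD('n)).\<close>
definition row_stochastic :: "real^'n^'n \<Rightarrow> bool" where
  "row_stochastic A \<longleftrightarrow> (\<forall>i j. A $ i $ j \<ge> 0) \<and> (\<forall>i. (\<Sum>j\<in>UNIV. A $ i $ j) = 1)"

definition A_sub :: "real^'n^'n \<Rightarrow> 'n set \<Rightarrow> real^'n^'n" where
  "A_sub A s = (\<chi> j k. if j \<in> s then A $ j $ k else (if k = j then 1 else 0))"

text \<open>Ergodic coefficient. For N = 1 there are no pairs i \<noteq> j; we use the convention 0.\<close>
definition ergcoef :: "real^'n^'n \<Rightarrow> real" where
  "ergcoef B = (if CARD('n) = 1 then 0 else
     1 - Min {(\<Sum>k\<in>UNIV. min (B $ i $ k) (B $ j $ k)) | i j. i \<noteq> j})"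

fun prodA :: "real^'n^'n \<Rightarrow> (nat \<Rightarrow> 'a \<Rightarrow> 'n set) \<Rightarrow> nat \<Rightarrow> 'a \<Rightarrow> real^'n^'n" where
  "prodA A \<sigma> 0 w = mat 1"
| "prodA A \<sigma> (Suc k) w = A_sub A (\<sigma> (Suc k) w) ** prodA A \<sigma> k w"

text \<open>Trajectory: traj k = x(k) for k \<ge> 1, x(1) = x1, x(k+1) = A_{sigma_k} x(k).
  (traj 0 is set to x1 as a dummy value.)\<close>
fun traj :: "real^'n^'n \<Rightarrow> (nat \<Rightarrow> 'a \<Rightarrow> 'n set) \<Rightarrow> real^'n \<Rightarrow> nat \<Rightarrow> 'a \<Rightarrow> real^'n" where
  "traj A \<sigma> x1 0 w = x1"
| "traj A \<sigma> x1 (Suc 0) w = x1"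
| "traj A \<sigma> x1 (Suc (Suc k)) w = A_sub A (\<sigma> (Suc k) w) *v traj A \<sigma> x1 (Suc k) w"

definition disagreement :: "real^'n \<Rightarrow> real" where
  "disagreement x = (\<Sum>j\<in>UNIV. (x $ j - (\<Sum>i\<in>UNIV. x $ i) / real CARD('n))\<^sup>2)"

text \<open>Consensus "almost surely" as defined in the paper (i.e. in probability).\<close>
definition reaches_consensus :: "'a measure \<Rightarrow> real^'n^'n \<Rightarrow> (nat \<Rightarrow> 'a \<Rightarrow> 'n set) \<Rightarrow> bool" where
  "reaches_consensus M A \<sigma> \<longleftrightarrow>
     (\<forall>\<epsilon>>0. \<forall>x1. (\<lambda>k. measure M {w \<in> space M. disagreement (traj A \<sigma> x1 k w) \<ge> \<epsilon>})
                     \<longlonglongrightarrow> 0)"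

end

theory Submission
  imports Defs
begin

text \<open>
  For a row-stochastic \<open>P\<close> and rows \<open>i \<noteq> j\<close>, write \<open>(P x)\<^sub>i - (P x)\<^sub>j\<close> as the difference of
  two sums of \<open>x\<close> against the nonnegative weights \<open>P\<^sub>i\<^sub>k - min(P\<^sub>i\<^sub>k, P\<^sub>j\<^sub>k)\<close> and
  \<open>P\<^sub>j\<^sub>k - min(P\<^sub>i\<^sub>k, P\<^sub>j\<^sub>k)\<close>, each of total mass at most \<open>\<lambda>(P)\<close>. Hence all entries of \<open>P x\<close>
  lie within \<open>2 \<lambda>(P) \<parallel>x\<parallel>\<close> of each other, and the disagreement of \<open>P x\<close> is small whenever
  \<open>\<lambda>(P)\<close> is. Conversely the pair \<open>i, j\<close> realising \<open>\<lambda>(P)\<close> is separated by exactly \<open>\<lambda>(P)\<close> when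
  \<open>P\<close> is applied to the indicator vector of \<open>{k. P\<^sub>j\<^sub>k < P\<^sub>i\<^sub>k}\<close>, so a large \<open>\<lambda>(P)\<close> produces
  a large disagreement from one of the finitely many initial states \<open>1\<^sub>S\<close>. Since
  \<open>x(k+1) = A\<^sub>\<sigma>\<^sub>k \<cdots> A\<^sub>\<sigma>\<^sub>1 x(1)\<close>, these two deterministic comparisons transfer to the
  probabilities of the events in question.
\<close>

lemma row_stochastic_mult:
  assumes "row_stochastic A" "row_stochastic B"
  shows "row_stochastic (A ** B)"
proof -
  have "(\<Sum>j\<in>UNIV. (A ** B) $ i $ j) = 1" for i
  proof -
    have "(\<Sum>j\<in>UNIV. (A ** B) $ i $ j) = (\<Sum>k\<in>UNIV. A $ i $ k * (\<Sum>j\<in>UNIV. B $ k $ j))"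
      by (simp add: matrix_matrix_mult_def sum_distrib_left) (rule sum.swap)
    also have "\<dots> = 1"
      using assms by (simp add: row_stochastic_def)
    finally show ?thesis .
  qed
  then show ?thesis
    using assms by (auto simp: row_stochastic_def matrix_matrix_mult_def intro: sum_nonneg)
qed

lemma row_stochastic_A_sub:
  assumes "row_stochastic A"
  shows "row_stochastic (A_sub A s)"
proof -
  have "(\<Sum>k\<in>UNIV. A_sub A s $ j $ k) = 1" for j
    using assms by (cases "j \<in> s") (simp_all add: A_sub_def row_stochastic_def)
  then show ?thesis
    using assms by (simp add: row_stochastic_def A_sub_def)
qed

lemma row_stochastic_mat_1: "row_stochastic (mat 1)"
  by (simp add: row_stochastic_def mat_def)

lemma row_stochastic_prodA:
  assumes "row_stochastic A"
  shows "row_stochastic (prodA A \<sigma> k w)"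
  by (induction k) (simp_all add: row_stochastic_mat_1 row_stochastic_mult row_stochastic_A_sub assms)

definition row_overlap :: "real^'n^'n \<Rightarrow> 'n \<Rightarrow> 'n \<Rightarrow> real" where
  "row_overlap P i j = (\<Sum>k\<in>UNIV. min (P $ i $ k) (P $ j $ k))"

lemma card_UNIV_eq_1_iff: "CARD('a::finite) = 1 \<longleftrightarrow> (\<forall>x y :: 'a. x = y)"
  using card_le_Suc0_iff_eq[of "UNIV :: 'a set"] by (auto simp: le_Suc_eq)

lemma ergcoef_eq_row_overlap:
  fixes P :: "real^'n::finite^'n"
  shows "ergcoef P = (if CARD('n) = 1 then 0 else 1 - Min {row_overlap P i j | i j :: 'n. i \<noteq> j})"
  by (simp add: ergcoef_def row_overlap_def)

lemma finite_row_overlaps: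
  fixes P :: "real^'n::finite^'n"
  shows "finite {row_overlap P i j | i j :: 'n. i \<noteq> j}"
  by (rule finite_subset[of _ "(\<lambda>(i, j). row_overlap P i j) ` UNIV"]) auto

lemma ergcoef_ge_row_overlap:
  fixes P :: "real^'n^'n"
  assumes "i \<noteq> j"
  shows "1 - row_overlap P i j \<le> ergcoef P"
proof -
  have "CARD('n) \<noteq> 1"
    using assms card_UNIV_eq_1_iff by blast
  moreover have "Min {row_overlap P i j | i j :: 'n. i \<noteq> j} \<le> row_overlap P i j"
    using assms by (intro Min_le finite_row_overlaps) auto
  ultimately show ?thesis
    by (simp add: ergcoef_eq_row_overlap)
qed

lemma ergcoef_attained:
  fixes P :: "real^'n^'n"
  assumes "CARD('n) \<noteq> 1"
  obtains i j where "i \<noteq> j" "ergcoef P = 1 - row_overlap P i j"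
proof -
  obtain i0 j0 :: 'n where "i0 \<noteq> j0"
    using assms card_UNIV_eq_1_iff by blast
  then have "Min {row_overlap P i j | i j :: 'n. i \<noteq> j} \<in> {row_overlap P i j | i j :: 'n. i \<noteq> j}"
    by (intro Min_in finite_row_overlaps) auto
  then show ?thesis
    using that assms by (auto simp: ergcoef_eq_row_overlap)
qed

lemma row_overlap_le_1:
  assumes "row_stochastic P"
  shows "row_overlap P i j \<le> 1"
proof -
  have "row_overlap P i j \<le> (\<Sum>k\<in>UNIV. P $ i $ k)"
    unfolding row_overlap_def by (intro sum_mono) simp
  then show ?thesis
    using assms by (simp add: row_stochastic_def)
qed

lemma ergcoef_nonneg:
  fixes P :: "real^'n^'n"
  assumes "row_stochastic P"
  shows "0 \<le> ergcoef P"
proof (cases "CARD('n) = 1")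
  case False
  then obtain i j where "ergcoef P = 1 - row_overlap P i j"
    by (rule ergcoef_attained)
  then show ?thesis
    using row_overlap_le_1[OF assms] by simp
qed (simp add: ergcoef_def)

lemma row_diff_le_row_overlap:
  fixes P :: "real^'n^'n"
  assumes "row_stochastic P" "\<And>k. \<bar>x $ k\<bar> \<le> b"
  shows "\<bar>(P *v x) $ i - (P *v x) $ j\<bar> \<le> 2 * b * (1 - row_overlap P i j)"
proof -
  define m where "m k = min (P $ i $ k) (P $ j $ k)" for k
  have excess_bound: "\<bar>\<Sum>k\<in>UNIV. (P $ l $ k - m k) * x $ k\<bar> \<le> b * (1 - row_overlap P i j)"
    if "l \<in> {i, j}" for l
  proof -
    have "\<bar>\<Sum>k\<in>UNIV. (P $ l $ k - m k) * x $ k\<bar> \<le> (\<Sum>k\<in>UNIV. (P $ l $ k - m k) * b)"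
      using that assms(2)
      by (intro order_trans[OF sum_abs] sum_mono)
         (auto simp: m_def abs_mult intro!: mult_left_mono)
    also have "\<dots> = b * (1 - row_overlap P i j)"
      using that assms(1)
      by (auto simp: row_stochastic_def row_overlap_def m_def sum_distrib_right[symmetric] sum_subtractf)
    finally show ?thesis .
  qed
  have "(P *v x) $ i - (P *v x) $ j
      = (\<Sum>k\<in>UNIV. (P $ i $ k - m k) * x $ k) - (\<Sum>k\<in>UNIV. (P $ j $ k - m k) * x $ k)"
    by (simp add: matrix_vector_mult_def sum_subtractf[symmetric] algebra_simps)
  then show ?thesis
    using excess_bound[of i] excess_bound[of j] by simp
qed

lemma row_diff_le_ergcoef:
  fixes P :: "real^'n^'n"
  assumes "row_stochastic P" "\<And>k. \<bar>x $ k\<bar> \<le> b"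
  shows "\<bar>(P *v x) $ i - (P *v x) $ j\<bar> \<le> 2 * b * ergcoef P"
proof -
  have "0 \<le> b"
    using assms(2) by (rule order_trans[OF abs_ge_zero])
  show ?thesis
  proof (cases "i = j")
    case True
    then show ?thesis
      using \<open>0 \<le> b\<close> ergcoef_nonneg[OF assms(1)] by simp
  next
    case False
    have "2 * b * (1 - row_overlap P i j) \<le> 2 * b * ergcoef P"
      using \<open>0 \<le> b\<close> ergcoef_ge_row_overlap[OF False] by (intro mult_left_mono) auto
    with row_diff_le_row_overlap[OF assms] show ?thesis
      by (rule order_trans)
  qed
qed

lemma disagreement_le_spread:
  fixes y :: "real^'n"
  assumes "\<And>i j. \<bar>y $ i - y $ j\<bar> \<le> c"
  shows "disagreement y \<le> real CARD('n) * c\<^sup>2"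
proof -
  have deviation_bound: "\<bar>y $ j - (\<Sum>i\<in>UNIV. y $ i) / real CARD('n)\<bar> \<le> c" for j
  proof -
    have "y $ j - (\<Sum>i\<in>UNIV. y $ i) / real CARD('n) = (\<Sum>i\<in>UNIV. y $ j - y $ i) / real CARD('n)"
      by (simp add: sum_subtractf field_simps)
    moreover have "\<bar>\<Sum>i\<in>UNIV. y $ j - y $ i\<bar> \<le> real CARD('n) * c"
    proof -
      have "\<bar>\<Sum>i\<in>UNIV. y $ j - y $ i\<bar> \<le> (\<Sum>i\<in>UNIV. \<bar>y $ j - y $ i\<bar>)"
        by (rule sum_abs)
      also have "\<dots> \<le> (\<Sum>i\<in>(UNIV :: 'n set). c)"
        by (intro sum_mono assms)
      finally show ?thesis
        by simp
    qed
    ultimately show ?thesis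
      by (simp add: divide_le_eq mult.commute)
  qed
  have "disagreement y \<le> (\<Sum>j\<in>(UNIV :: 'n set). c\<^sup>2)"
    unfolding disagreement_def using deviation_bound
    by (intro sum_mono) (metis abs_le_square_iff abs_of_nonneg abs_ge_zero order_trans)
  then show ?thesis
    by simp
qed

lemma disagreement_le_ergcoef:
  fixes P :: "real^'n^'n"
  assumes "row_stochastic P"
  shows "disagreement (P *v x) \<le> real CARD('n) * (2 * norm x * ergcoef P)\<^sup>2"
  by (intro disagreement_le_spread row_diff_le_ergcoef assms component_le_norm_cart)

lemma ergcoef_ge_of_disagreement_ge:
  fixes P :: "real^'n^'n"
  assumes "row_stochastic P" "\<epsilon> \<le> disagreement (P *v x)"
  shows "sqrt (\<epsilon> / real CARD('n)) / (2 * (norm x + 1)) \<le> ergcoef P"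
proof -
  have "sqrt (\<epsilon> / real CARD('n)) \<le> sqrt ((2 * norm x * ergcoef P)\<^sup>2)"
    using assms(2) disagreement_le_ergcoef[OF assms(1), of x]
    by (intro real_sqrt_le_mono) (simp add: field_simps)
  also have "\<dots> = 2 * norm x * ergcoef P"
    using ergcoef_nonneg[OF assms(1)] by simp
  also have "\<dots> \<le> ergcoef P * (2 * (norm x + 1))"
    using ergcoef_nonneg[OF assms(1)] by (simp add: algebra_simps)
  finally show ?thesis
    by (rule pos_divide_le_eq[THEN iffD2, rotated]) (simp add: add_nonneg_pos)
qed

lemma disagreement_nonneg: "0 \<le> disagreement y"
  by (simp add: disagreement_def sum_nonneg)

lemma half_sq_diff_le_disagreement:
  fixes y :: "real^'n"
  shows "(y $ i - y $ j)\<^sup>2 / 2 \<le> disagreement y"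
proof (cases "i = j")
  case True
  then show ?thesis
    by (simp add: disagreement_nonneg)
next
  case False
  define m where "m = (\<Sum>i\<in>UNIV. y $ i) / real CARD('n)"
  have "(y $ i - y $ j)\<^sup>2 / 2 \<le> (y $ i - m)\<^sup>2 + (y $ j - m)\<^sup>2"
    using zero_le_power2[of "y $ i + y $ j - 2 * m"] by (simp add: power2_eq_square field_simps)
  also have "\<dots> = (\<Sum>k\<in>{i, j}. (y $ k - m)\<^sup>2)"
    using False by simp
  also have "\<dots> \<le> (\<Sum>k\<in>UNIV. (y $ k - m)\<^sup>2)"
    by (intro sum_mono2) auto
  finally show ?thesis
    by (simp add: disagreement_def m_def)
qed

lemma row_diff_indicator_eq_1_minus_row_overlap:
  fixes P :: "real^'n^'n"
  assumes "row_stochastic P"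
  shows "(P *v (\<chi> k. indicator {k. P $ j $ k < P $ i $ k} k)) $ i
       - (P *v (\<chi> k. indicator {k. P $ j $ k < P $ i $ k} k)) $ j = 1 - row_overlap P i j"
proof -
  let ?x = "\<chi> k. (indicator {k. P $ j $ k < P $ i $ k} k :: real)"
  have "(P *v ?x) $ i - (P *v ?x) $ j = (\<Sum>k\<in>UNIV. (P $ i $ k - P $ j $ k) * ?x $ k)"
    by (simp add: matrix_vector_mult_def sum_subtractf algebra_simps)
  also have "\<dots> = (\<Sum>k\<in>UNIV. P $ i $ k - min (P $ i $ k) (P $ j $ k))"
    by (intro sum.cong) (auto simp: min_def)
  also have "\<dots> = 1 - row_overlap P i j"
    using assms by (simp add: sum_subtractf row_stochastic_def row_overlap_def)
  finally show ?thesis .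
qed

lemma disagreement_indicator_ge_of_ergcoef_ge:
  fixes P :: "real^'n^'n"
  assumes "row_stochastic P" "0 \<le> \<epsilon>" "\<epsilon> \<le> ergcoef P"
  shows "\<exists>S. \<epsilon>\<^sup>2 / 2 \<le> disagreement (P *v (\<chi> k. indicator S k))"
proof (cases "CARD('n) = 1")
  case True
  then have "\<epsilon> = 0"
    using assms(2,3) by (simp add: ergcoef_def)
  then show ?thesis
    by (simp add: disagreement_nonneg)
next
  case False
  then obtain i j where "ergcoef P = 1 - row_overlap P i j"
    by (rule ergcoef_attained)
  let ?x = "\<chi> k. indicator {k. P $ j $ k < P $ i $ k} k"
  have "\<epsilon>\<^sup>2 / 2 \<le> (ergcoef P)\<^sup>2 / 2"
    using power_mono[OF assms(3,2)] by simp
  also have "\<dots> = ((P *v ?x) $ i - (P *v ?x) $ j)\<^sup>2 / 2"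
    using \<open>ergcoef P = _\<close> row_diff_indicator_eq_1_minus_row_overlap[OF assms(1)] by simp
  also have "\<dots> \<le> disagreement (P *v ?x)"
    by (rule half_sq_diff_le_disagreement)
  finally show ?thesis
    by blast
qed

lemma sets_Collect_count_space_comp:
  assumes "f \<in> measurable M (count_space UNIV)"
  shows "{w \<in> space M. \<Phi> (f w)} \<in> sets M"
  using pred_sets1[OF _ assms] by (simp add: pred_def)

lemma (in finite_measure) measure_tendsto_0_subset:
  assumes "\<And>k. A k \<subseteq> B k" "\<And>k. B k \<in> sets M" "(\<lambda>k. measure M (B k)) \<longlonglongrightarrow> 0"
  shows "(\<lambda>k. measure M (A k)) \<longlonglongrightarrow> 0"
  by (rule tendsto_sandwich[OF always_eventually always_eventually tendsto_const assms(3)])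
     (auto intro!: finite_measure_mono assms(1,2))

lemma (in finite_measure) measure_UN_tendsto_0:
  assumes "finite I" "\<And>i k. i \<in> I \<Longrightarrow> F i k \<in> sets M"
    and "\<And>i. i \<in> I \<Longrightarrow> (\<lambda>k. measure M (F i k)) \<longlonglongrightarrow> 0"
  shows "(\<lambda>k. measure M (\<Union>i\<in>I. F i k)) \<longlonglongrightarrow> 0"
proof -
  have sum_tendsto: "(\<lambda>k. \<Sum>i\<in>I. measure M (F i k)) \<longlonglongrightarrow> 0"
    using tendsto_sum[OF assms(3)] by simp
  show ?thesis
    by (rule tendsto_sandwich[OF always_eventually always_eventually tendsto_const sum_tendsto])
       (auto intro!: measure_UNION_le assms(1,2))
qed

lemma (in finite_measure) ergcoef_tendsto_0_if_disagreement_tendsto_0: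
  fixes P :: "nat \<Rightarrow> 'a \<Rightarrow> real^'n^'n"
  assumes stochastic: "\<And>k w. row_stochastic (P k w)"
    and measurable: "\<And>k. P k \<in> measurable M (count_space UNIV)"
    and consensus: "\<And>\<epsilon> x. 0 < \<epsilon> \<Longrightarrow>
      (\<lambda>k. measure M {w \<in> space M. \<epsilon> \<le> disagreement (P k w *v x)}) \<longlonglongrightarrow> 0"
    and "0 < \<epsilon>"
  shows "(\<lambda>k. measure M {w \<in> space M. \<epsilon> \<le> ergcoef (P k w)}) \<longlonglongrightarrow> 0"
proof -
  let ?F = "\<lambda>S k. {w \<in> space M. \<epsilon>\<^sup>2 / 2 \<le> disagreement (P k w *v (\<chi> j. indicator S j))}"
  have F_sets: "?F S k \<in> sets M" for S k
    using measurable by (rule sets_Collect_count_space_comp)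
  have "{w \<in> space M. \<epsilon> \<le> ergcoef (P k w)} \<subseteq> (\<Union>S. ?F S k)" for k
    using disagreement_indicator_ge_of_ergcoef_ge[OF stochastic] \<open>0 < \<epsilon>\<close> by fastforce
  moreover have "(\<Union>S. ?F S k) \<in> sets M" for k
    using F_sets by (intro sets.finite_UN) simp_all
  moreover have "(\<lambda>k. measure M (\<Union>S. ?F S k)) \<longlonglongrightarrow> 0"
  proof (rule measure_UN_tendsto_0)
    show "(\<lambda>k. measure M (?F S k)) \<longlonglongrightarrow> 0" for S
      using \<open>0 < \<epsilon>\<close> by (intro consensus) simp
  qed (simp_all only: F_sets, simp)
  ultimately show ?thesis
    by (rule measure_tendsto_0_subset)
qed

lemma (in finite_measure) disagreement_tendsto_0_if_ergcoef_tendsto_0: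
  fixes P :: "nat \<Rightarrow> 'a \<Rightarrow> real^'n^'n"
  assumes stochastic: "\<And>k w. row_stochastic (P k w)"
    and measurable: "\<And>k. P k \<in> measurable M (count_space UNIV)"
    and contraction: "\<And>\<delta>. 0 < \<delta> \<Longrightarrow>
      (\<lambda>k. measure M {w \<in> space M. \<delta> \<le> ergcoef (P k w)}) \<longlonglongrightarrow> 0"
    and "0 < \<epsilon>"
  shows "(\<lambda>k. measure M {w \<in> space M. \<epsilon> \<le> disagreement (P k w *v x)}) \<longlonglongrightarrow> 0"
proof -
  define \<delta> where "\<delta> = sqrt (\<epsilon> / real CARD('n)) / (2 * (norm x + 1))"
  have "\<delta> \<le> ergcoef (P k w)" if "\<epsilon> \<le> disagreement (P k w *v x)" for k w
    unfolding \<delta>_def using stochastic that by (rule ergcoef_ge_of_disagreement_ge)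
  then have "{w \<in> space M. \<epsilon> \<le> disagreement (P k w *v x)}
      \<subseteq> {w \<in> space M. \<delta> \<le> ergcoef (P k w)}" for k
    by blast
  moreover have "{w \<in> space M. \<delta> \<le> ergcoef (P k w)} \<in> sets M" for k
    using measurable by (rule sets_Collect_count_space_comp)
  moreover have "0 < \<delta>"
    using \<open>0 < \<epsilon>\<close> by (simp add: \<delta>_def add_nonneg_pos)
  then have "(\<lambda>k. measure M {w \<in> space M. \<delta> \<le> ergcoef (P k w)}) \<longlonglongrightarrow> 0"
    by (rule contraction)
  ultimately show ?thesis
    by (rule measure_tendsto_0_subset)
qed

lemma traj_Suc_eq_prodA: "traj A \<sigma> x1 (Suc k) w = prodA A \<sigma> k w *v x1"
  by (induction k) (simp_all add: matrix_vector_mul_assoc)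

lemma measurable_prodA:
  assumes "\<And>k. k \<ge> 1 \<Longrightarrow> \<sigma> k \<in> measurable M (count_space UNIV)"
  shows "(\<lambda>w. prodA A \<sigma> k w) \<in> measurable M (count_space UNIV)"
proof (induction k)
  case (Suc k)
  have "(\<lambda>w. A_sub A s ** prodA A \<sigma> k w) \<in> measurable M (count_space UNIV)" for s
    using Suc by (rule measurable_compose) simp
  then show ?case
    using assms[of "Suc k"] by (auto intro: measurable_compose_countable')
qed simp

lemma reaches_consensus_iff_prodA:
  "reaches_consensus M A \<sigma> \<longleftrightarrow>
    (\<forall>\<epsilon>>0. \<forall>x1. (\<lambda>k. measure M {w \<in> space M. \<epsilon> \<le> disagreement (prodA A \<sigma> k w *v x1)}) \<longlonglongrightarrow> 0)"
proof -
  have "(\<lambda>k. measure M {w \<in> space M. \<epsilon> \<le> disagreement (traj A \<sigma> x1 k w)}) \<longlonglongrightarrow> 0 \<longleftrightarrow>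
      (\<lambda>k. measure M {w \<in> space M. \<epsilon> \<le> disagreement (prodA A \<sigma> k w *v x1)}) \<longlonglongrightarrow> 0" for \<epsilon> x1
    by (subst filterlim_sequentially_Suc[symmetric]) (simp only: traj_Suc_eq_prodA)
  then show ?thesis
    by (simp add: reaches_consensus_def)
qed

theorem lemma2:
  fixes M :: "'a measure" and A :: "real^'n^'n" and \<sigma> :: "nat \<Rightarrow> 'a \<Rightarrow> 'n set"
  assumes "prob_space M"
    and "row_stochastic A"
    and "\<And>k. k \<ge> 1 \<Longrightarrow> \<sigma> k \<in> measurable M (count_space UNIV)"
  shows "reaches_consensus M A \<sigma> \<longleftrightarrow>
         (\<forall>\<epsilon>>0. (\<lambda>k. measure M {w \<in> space M. ergcoef (prodA A \<sigma> k w) \<ge> \<epsilon>}) \<longlonglongrightarrow> 0)"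
proof -
  interpret prob_space M
    by (rule assms(1))
  have stochastic: "row_stochastic (prodA A \<sigma> k w)" for k w
    using assms(2) by (rule row_stochastic_prodA)
  have measurable: "prodA A \<sigma> k \<in> measurable M (count_space UNIV)" for k
    using assms(3) by (rule measurable_prodA)
  show ?thesis
    unfolding reaches_consensus_iff_prodA
  proof (intro iffI allI impI)
    show "(\<lambda>k. measure M {w \<in> space M. ergcoef (prodA A \<sigma> k w) \<ge> \<epsilon>}) \<longlonglongrightarrow> 0"
      if "\<forall>\<epsilon>>0. \<forall>x. (\<lambda>k. measure M
            {w \<in> space M. \<epsilon> \<le> disagreement (prodA A \<sigma> k w *v x)}) \<longlonglongrightarrow> 0"
        and "0 < \<epsilon>" for \<epsilon>
      using that
      by (intro ergcoef_tendsto_0_if_disagreement_tendsto_0[where P = "prodA A \<sigma>", OF stochastic measurable])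
         simp_all
    show "(\<lambda>k. measure M {w \<in> space M. \<epsilon> \<le> disagreement (prodA A \<sigma> k w *v x)}) \<longlonglongrightarrow> 0"
      if "\<forall>\<delta>>0. (\<lambda>k. measure M {w \<in> space M. ergcoef (prodA A \<sigma> k w) \<ge> \<delta>}) \<longlonglongrightarrow> 0"
        and "0 < \<epsilon>" for \<epsilon> x
      using that
      by (intro disagreement_tendsto_0_if_ergcoef_tendsto_0[where P = "prodA A \<sigma>", OF stochastic measurable])
         simp_all
  qed
qed

end
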